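(* Assume (A.3). Then there is a constant $C_{T,\lambda,\epsilon}>0$, independent of $h$, such that for all sufficiently small $h$, \[ \int_0^T\big\|f(\dot{\hat y}_h(t),\hat y_h(t),\hat u_h(t),t)\big\|_2^2\,dt\le C_{T,\lambda,\epsilon}h^{2\lambda\eta}. \]
   Context: Let $T>0$. $\mathcal{X}$: pairs $(y,u)$ with $y:[0,T]\to\mathbb{R}^{n_y}$, $y\in L^\infty$, $\dot y\in L^2$ (weak derivative), $u\in L^\infty([0,T];\mathbb{R}^{n_u})$; $\|(y,u)\|_{\mathcal{X}}=\|\dot y\|_{L^2}+\operatorname{ess\,sup}_t\|(y(t),u(t))\|_\infty$, where $\|\dot y\|_{L^2}=(\int_0^T\|\dot y\|_2^2dt)^{1/2}$. Given $M,b$ on $\mathbb{R}^{n_y}\times\mathbb{R}^{n_y}$, $f_1:\mathbb{R}^{n_y}\times\mathbb{R}^{n_u}\times[0,T]\to\mathbb{R}^{n_y}$, $f_2:\mathbb{R}^{n_y}\times\mathbb{R}^{n_u}\times[0,T]\to\mathbb{R}^{n_c}$ and bounds $y_L\le y_R$, $u_L\le u_R$, the optimal control problem minimizes $M(y(0),y(T))$ over $\mathcal{X}$ subject to $b(y(0),y(T))=0$, $\dot y=f_1(y,u,t)$ and $f_2(y,u,t)=0$ a.e., and the bounds for all $t$; $(y^\star,u^\star)$ is a local minimizer. $f(\dot y,y,u,t)=(f_1(y,u,t)-\dot y,\ f_2(y,u,t))$. Mesh $0=t_1<\dots<t_{N+1}=T$, $h=\max_i(t_{i+1}-t_i)$,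 degree $p$; $\mathcal{X}_{h,p}$: $y_h$ continuous and polynomial of degree $\le p$ on each mesh interval, $u_h$ polynomial of degree $\le p-1$ on each mesh interval; $\mathcal{B}_{h,p}\subset\mathcal{X}_{h,p}$ the pairs satisfying the bounds at the sampling points. (Approximability) there are $h_0,\eta,C_\eta>0$ such that for all $h\le h_0$ there is $(y_h,u_h)\in\mathcal{B}_{h,p}$ with $\|(y^\star,u^\star)-(y_h,u_h)\|_{\mathcal{X}}\le C_\eta h^\eta$; $(\hat y_h,\hat u_h)$ denotes a fixed such pair. (A.3): there are $\lambda\in(0,1]$, $C_\lambda>0$, $\epsilon>0$ such that $M$ and $b$ are $\lambda$-H\"older with constant $C_\lambda$ at $(y^\star(0),y^\star(T))$ within Euclidean distance $\epsilon$, and for each $t$, $\|(f_1(y^\star(t),u^\star(t),t)-f_1(v,w,t),f_2(y^\star(t),u^\star(t),t)-f_2(v,w,t))\|_2\le C_\lambda\|(y^\star(t)-v,u^\star(t)-w)\|_2^\lambda$ whenever $\|(y^\star(t)-v,u^\star(t)-w)\|_2\le\epsilon$. *)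

theory Defs
  imports "HOL-Analysis.Analysis" "HOL-Computational_Algebra.Polynomial"
begin

text \<open>Weak derivative on [0,T], using the continuous (absolutely continuous) representative.\<close>
definition weak_deriv_on :: "real \<Rightarrow> (real \<Rightarrow> real^'n) \<Rightarrow> (real \<Rightarrow> real^'n) \<Rightarrow> bool" where
  "weak_deriv_on T y yd \<longleftrightarrow> yd integrable_on {0..T} \<and>
     (\<forall>t\<in>{0..T}. y t = y 0 + integral {0..t} yd)"

definition L2_on :: "real \<Rightarrow> (real \<Rightarrow> real^'n) \<Rightarrow> bool" where
  "L2_on T g \<longleftrightarrow> g measurable_on {0..T} \<and> (\<lambda>t. (norm (g t))\<^sup>2) integrable_on {0..T}"

definition L2_norm_on :: "real \<Rightarrow> (real \<Rightarrow> real^'n) \<Rightarrow> real" where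
  "L2_norm_on T g = sqrt (integral {0..T} (\<lambda>t. (norm (g t))\<^sup>2))"

definition ess_bounded_on :: "real \<Rightarrow> (real \<Rightarrow> 'a::real_normed_vector) \<Rightarrow> bool" where
  "ess_bounded_on T g \<longleftrightarrow> (\<exists>B. AE t in lebesgue. t \<in> {0..T} \<longrightarrow> norm (g t) \<le> B)"

definition ess_sup_on :: "real \<Rightarrow> (real \<Rightarrow> real) \<Rightarrow> real" where
  "ess_sup_on T g = Inf {c. AE t in lebesgue. t \<in> {0..T} \<longrightarrow> g t \<le> c}"

definition in_X :: "real \<Rightarrow> (real \<Rightarrow> real^'ny) \<Rightarrow> (real \<Rightarrow> real^'nu) \<Rightarrow> bool" where
  "in_X T y u \<longleftrightarrow> y measurable_on {0..T} \<and> ess_bounded_on T y \<and>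
     (\<exists>yd. weak_deriv_on T y yd \<and> L2_on T yd) \<and>
     u measurable_on {0..T} \<and> ess_bounded_on T u"

definition X_norm :: "real \<Rightarrow> (real \<Rightarrow> real^'ny) \<Rightarrow> (real \<Rightarrow> real^'ny) \<Rightarrow> (real \<Rightarrow> real^'nu) \<Rightarrow> real" where
  "X_norm T yd y u = L2_norm_on T yd + ess_sup_on T (\<lambda>t. infnorm (y t, u t))"

definition X_close :: "real \<Rightarrow> (real \<Rightarrow> real^'ny) \<Rightarrow> (real \<Rightarrow> real^'nu) \<Rightarrow>
    (real \<Rightarrow> real^'ny) \<Rightarrow> (real \<Rightarrow> real^'nu) \<Rightarrow> real \<Rightarrow> bool" where
  "X_close T y u y' u' d \<longleftrightarrow> (\<exists>yd yd'. weak_deriv_on T y yd \<and> weak_deriv_on T y' yd' \<and>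
      L2_on T yd \<and> L2_on T yd' \<and>
      X_norm T (\<lambda>t. yd t - yd' t) (\<lambda>t. y t - y' t) (\<lambda>t. u t - u' t) \<le> d)"

definition within_bounds :: "real^'ny \<Rightarrow> real^'ny \<Rightarrow> real^'nu \<Rightarrow> real^'nu \<Rightarrow> real^'ny \<Rightarrow> real^'nu \<Rightarrow> bool" where
  "within_bounds yL yR uL uR v w \<longleftrightarrow>
     (\<forall>i. yL $ i \<le> v $ i \<and> v $ i \<le> yR $ i) \<and> (\<forall>j. uL $ j \<le> w $ j \<and> w $ j \<le> uR $ j)"

definition feasible :: "real \<Rightarrow> (real^'ny \<Rightarrow> real^'ny \<Rightarrow> real^'nb) \<Rightarrow>
    (real^'ny \<Rightarrow> real^'nu \<Rightarrow> real \<Rightarrow> real^'ny) \<Rightarrow> (real^'ny \<Rightarrow> real^'nu \<Rightarrow> real \<Rightarrow> real^'nc) \<Rightarrow>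
    real^'ny \<Rightarrow> real^'ny \<Rightarrow> real^'nu \<Rightarrow> real^'nu \<Rightarrow>
    (real \<Rightarrow> real^'ny) \<Rightarrow> (real \<Rightarrow> real^'nu) \<Rightarrow> bool" where
  "feasible T b f1 f2 yL yR uL uR y u \<longleftrightarrow> in_X T y u \<and> b (y 0) (y T) = 0 \<and>
     (\<exists>yd. weak_deriv_on T y yd \<and> (AE t in lebesgue. t \<in> {0..T} \<longrightarrow> yd t = f1 (y t) (u t) t)) \<and>
     (AE t in lebesgue. t \<in> {0..T} \<longrightarrow> f2 (y t) (u t) t = 0) \<and>
     (\<forall>t\<in>{0..T}. within_bounds yL yR uL uR (y t) (u t))"

definition local_minimizer :: "real \<Rightarrow> (real^'ny \<Rightarrow> real^'ny \<Rightarrow> real) \<Rightarrow> (real^'ny \<Rightarrow> real^'ny \<Rightarrow> real^'nb) \<Rightarrow>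
    (real^'ny \<Rightarrow> real^'nu \<Rightarrow> real \<Rightarrow> real^'ny) \<Rightarrow> (real^'ny \<Rightarrow> real^'nu \<Rightarrow> real \<Rightarrow> real^'nc) \<Rightarrow>
    real^'ny \<Rightarrow> real^'ny \<Rightarrow> real^'nu \<Rightarrow> real^'nu \<Rightarrow>
    (real \<Rightarrow> real^'ny) \<Rightarrow> (real \<Rightarrow> real^'nu) \<Rightarrow> bool" where
  "local_minimizer T M b f1 f2 yL yR uL uR ys us \<longleftrightarrow>
     feasible T b f1 f2 yL yR uL uR ys us \<and>
     (\<exists>d>0. \<forall>y u. feasible T b f1 f2 yL yR uL uR y u \<and> X_close T y u ys us d \<longrightarrow>
        M (ys 0) (ys T) \<le> M (y 0) (y T))"

definition is_mesh :: "real \<Rightarrow> (nat \<Rightarrow> real) \<Rightarrow> nat \<Rightarrow> bool" where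
  "is_mesh T tm N \<longleftrightarrow> N \<ge> 1 \<and> tm 1 = 0 \<and> tm (N + 1) = T \<and> (\<forall>i\<in>{1..N}. tm i < tm (Suc i))"

definition mesh_width :: "(nat \<Rightarrow> real) \<Rightarrow> nat \<Rightarrow> real" where
  "mesh_width tm N = Max {tm (Suc i) - tm i | i. i \<in> {1..N}}"

definition in_Xhp :: "real \<Rightarrow> (nat \<Rightarrow> real) \<Rightarrow> nat \<Rightarrow> nat \<Rightarrow> (real \<Rightarrow> real^'ny) \<Rightarrow> (real \<Rightarrow> real^'nu) \<Rightarrow> bool" where
  "in_Xhp T tm N p y u \<longleftrightarrow> continuous_on {0..T} y \<and>
     (\<forall>i\<in>{1..N}.
        (\<forall>k. \<exists>q::real poly. degree q \<le> p \<and> (\<forall>t\<in>{tm i..tm (Suc i)}. y t $ k = poly q t)) \<and>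
        (\<forall>k. \<exists>q::real poly. degree q \<le> p - 1 \<and> (\<forall>t\<in>{tm i..<tm (Suc i)}. u t $ k = poly q t)))"

text \<open>B_{h,p}: elements of X_{h,p} satisfying the bounds at the sampling points
  (the sampling points of a mesh are given by the abstract parameter samp).\<close>
definition in_Bhp :: "real \<Rightarrow> ((nat \<Rightarrow> real) \<Rightarrow> nat \<Rightarrow> real set) \<Rightarrow> (nat \<Rightarrow> real) \<Rightarrow> nat \<Rightarrow> nat \<Rightarrow>
    real^'ny \<Rightarrow> real^'ny \<Rightarrow> real^'nu \<Rightarrow> real^'nu \<Rightarrow>
    (real \<Rightarrow> real^'ny) \<Rightarrow> (real \<Rightarrow> real^'nu) \<Rightarrow> bool" where
  "in_Bhp T samp tm N p yL yR uL uR y u \<longleftrightarrow> in_Xhp T tm N p y u \<and>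
     (\<forall>s\<in>samp tm N. within_bounds yL yR uL uR (y s) (u s))"

end

(* The minimiser (ys, us) satisfies the dynamics and the algebraic constraint exactly, so almost
   everywhere the residual of the approximant (y_h, u_h) is the derivative mismatch between ys and
   y_h plus the increment of (f1, f2) between (ys, us) and (y_h, u_h). The X-distance C_eta h^eta
   bounds the mismatch in L2 and the uniform distance, so for small h the Hoelder condition bounds
   the increment pointwise by C_lam (2 sqrt(n_y + n_u) C_eta h^eta)^lam. Squaring and integrating
   gives O(h^(2 lam eta)) + O(h^(2 eta)), and h^(2 eta) <= h^(2 lam eta) for h <= 1 since lam <= 1.
   Comparing weak derivatives needs that they are unique almost everywhere, i.e. that a function
   whose indefinite integral vanishes is zero almost everywhere. *)

theory Submission
  imports Defs
begin

(* The positive and negative parts of g are densities of two finite measures that agree on the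
   half-lines, which generate the Borel sets. *)
lemma AE_zero_if_halfline_integrals_zero:
  fixes g :: "real \<Rightarrow> real"
  assumes g: "integrable lborel g" and zero: "\<And>a. (LINT x:{a<..}|lborel. g x) = 0"
  shows "AE x in lborel. g x = 0"
proof -
  define P where "P x = max (g x) 0" for x
  define N where "N x = max (- g x) 0" for x
  have P: "integrable lborel P" and N: "integrable lborel N"
    unfolding P_def N_def using g by (auto intro: integrable_max)
  have P_nonneg: "0 \<le> P x" and N_nonneg: "0 \<le> N x" for x
    by (simp_all add: P_def N_def)
  have set_integrable_halfline: "set_integrable lborel {a<..} h"
    if "integrable lborel h" for h :: "real \<Rightarrow> real" and a :: real
    unfolding set_integrable_def using that by (rule integrable_mult_indicator[rotated]) simp
  have emeasure_halfline: "emeasure (density lborel (\<lambda>x. ennreal (h x))) {a<..}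
      = ennreal (LINT x:{a<..}|lborel. h x)"
    if h: "integrable lborel h" "\<And>x. 0 \<le> h x" for h :: "real \<Rightarrow> real" and a :: real
  proof -
    have "emeasure (density lborel (\<lambda>x. ennreal (h x))) {a<..}
        = (\<integral>\<^sup>+ x. ennreal (indicator {a<..} x *\<^sub>R h x) \<partial>lborel)"
      using h by (subst emeasure_density) (auto simp: indicator_def intro!: nn_integral_cong)
    also have "\<dots> = ennreal (LINT x:{a<..}|lborel. h x)"
      using set_integrable_halfline[OF h(1)] h(2) unfolding set_lebesgue_integral_def set_integrable_def
      by (intro nn_integral_eq_integral) auto
    finally show ?thesis .
  qed
  have "(LINT x:{a<..}|lborel. P x) - (LINT x:{a<..}|lborel. N x) = (LINT x:{a<..}|lborel. g x)" for a
    using set_integrable_halfline[OF P] set_integrable_halfline[OF N]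
    by (subst set_integral_diff(2)[symmetric]) (auto simp: P_def N_def intro: set_lebesgue_integral_cong)
  then have "density lborel (\<lambda>x. ennreal (P x)) = density lborel (\<lambda>x. ennreal (N x))"
    using zero by (intro measure_eqI_lessThan)
      (simp_all add: emeasure_halfline[OF P P_nonneg] emeasure_halfline[OF N N_nonneg])
  moreover have "integral\<^sup>N lborel (\<lambda>x. ennreal (P x)) \<noteq> \<infinity>"
    using nn_integral_eq_integral[OF P] by (simp add: P_def)
  ultimately have "AE x in lborel. ennreal (P x) = ennreal (N x)"
    using P N by (subst finite_density_unique[symmetric]) auto
  then show ?thesis
    by eventually_elim (auto simp: P_def N_def max_def split: if_splits)
qed

lemma integral_subinterval_eq_0_if_indefinite_integral_zero:
  fixes f :: "real \<Rightarrow> real"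
  assumes f: "f integrable_on {0..T}" and zero: "\<And>t. t \<in> {0..T} \<Longrightarrow> integral {0..t} f = 0"
    and uv: "0 \<le> u" "u \<le> v" "v \<le> T"
  shows "integral {u..v} f = 0"
proof -
  have "integral {0..u} f + integral {u..v} f = integral {0..v} f"
    using uv by (intro Henstock_Kurzweil_Integration.integral_combine integrable_subinterval_real[OF f]) auto
  then show ?thesis
    using uv zero[of u] zero[of v] by simp
qed

lemma integral_halfline_eq_0_if_indefinite_integral_zero:
  fixes f :: "real \<Rightarrow> real"
  assumes f: "f integrable_on {0..T}" and zero: "\<And>t. t \<in> {0..T} \<Longrightarrow> integral {0..t} f = 0"
  shows "integral ({0..T} \<inter> {a<..}) f = 0"
proof (cases "max 0 a \<le> T")
  case True
  have "integral ({0..T} \<inter> {a<..}) f = integral {max 0 a..T} f"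
    by (rule integral_spike_set; rule negligible_subset[of "{a}"]) auto
  then show ?thesis
    using True integral_subinterval_eq_0_if_indefinite_integral_zero[OF f zero, of "max 0 a" T] by simp
next
  case False
  then have "{0..T} \<inter> {a<..} = {}"
    by auto
  then show ?thesis
    by simp
qed

lemma absolutely_integrable_if_indefinite_integral_zero:
  fixes f :: "real \<Rightarrow> real"
  assumes f: "f integrable_on {0..T}" and zero: "\<And>t. t \<in> {0..T} \<Longrightarrow> integral {0..t} f = 0"
  shows "f absolutely_integrable_on {0..T}"
proof -
  have "f absolutely_integrable_on cbox 0 T"
  proof (rule bounded_variation_absolutely_integrable_interval[where B = 0])
    fix d assume d: "d division_of cbox 0 T"
    have "integral K f = 0" if "K \<in> d" for K
      using division_ofD(2,3,4)[OF d that] integral_subinterval_eq_0_if_indefinite_integral_zero[OF f zero]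
      by fastforce
    then show "(\<Sum>K\<in>d. norm (integral K f)) \<le> 0"
      by simp
  qed (use f in simp)
  then show ?thesis
    by simp
qed

lemma AE_zero_if_indefinite_integral_zero:
  fixes f :: "real \<Rightarrow> real"
  assumes f: "f integrable_on {0..T}" and zero: "\<And>t. t \<in> {0..T} \<Longrightarrow> integral {0..t} f = 0"
  shows "AE t in lebesgue. t \<in> {0..T} \<longrightarrow> f t = 0"
proof -
  note abs_int = absolutely_integrable_if_indefinite_integral_zero[OF f zero]
  define F where "F = (\<lambda>x. indicator {0..T} x * f x)"
  have F: "integrable lebesgue F"
    using abs_int by (simp add: F_def set_integrable_def)
  then obtain G where G: "G \<in> borel_measurable lborel" and FG: "AE x in lborel. F x = G x"
    using completion_ex_borel_measurable_real[of F lborel] by auto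
  have FG': "AE x in lebesgue. F x = G x"
    using FG by (rule AE_completion)
  have G_int: "integrable lborel G"
    using integrable_cong_AE_imp[OF F measurable_completion[OF G] FG'] integrable_completion[OF G] by simp
  have "(LINT x:{a<..}|lborel. G x) = 0" for a
  proof -
    have "(LINT x:{a<..}|lborel. G x) = (LINT x:{a<..}|lebesgue. G x)"
      unfolding set_lebesgue_integral_def using G by (intro integral_completion[symmetric]) simp
    also have "\<dots> = (LINT x:{a<..}|lebesgue. F x)"
      using FG' F measurable_completion[OF G]
      by (intro set_lebesgue_integral_cong_AE) (auto elim: eventually_mono)
    also have "\<dots> = (LINT x:{0..T} \<inter> {a<..}|lebesgue. f x)"
      by (simp add: F_def set_lebesgue_integral_def indicator_inter_arith mult_ac)
    also have "\<dots> = integral ({0..T} \<inter> {a<..}) f"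
      by (intro set_lebesgue_integral_eq_integral(2) set_integrable_subset[OF abs_int]) auto
    finally show ?thesis
      using integral_halfline_eq_0_if_indefinite_integral_zero[OF f zero] by simp
  qed
  then have "AE x in lborel. G x = 0"
    by (rule AE_zero_if_halfline_integrals_zero[OF G_int])
  then have "AE x in lebesgue. G x = 0"
    by (rule AE_completion)
  then show ?thesis
    using FG' by eventually_elim (simp add: F_def indicator_def)
qed

lemma weak_deriv_on_AE_unique:
  assumes yd1: "weak_deriv_on T y yd1" and yd2: "weak_deriv_on T y yd2"
  shows "AE t in lebesgue. t \<in> {0..T} \<longrightarrow> yd1 t = yd2 t"
proof -
  have int1: "yd1 integrable_on {0..T}" and int2: "yd2 integrable_on {0..T}"
    using yd1 yd2 unfolding weak_deriv_on_def by blast+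
  have "integral {0..t} (\<lambda>t. (yd1 t - yd2 t) \<bullet> b) = 0" if t: "t \<in> {0..T}" for t b
  proof -
    have int1': "yd1 integrable_on {0..t}" and int2': "yd2 integrable_on {0..t}"
      using int1 int2 t by (auto intro: integrable_subinterval_real)
    have "integral {0..t} (\<lambda>t. (yd1 t - yd2 t) \<bullet> b) = (integral {0..t} yd1 - integral {0..t} yd2) \<bullet> b"
      using integral_component_eq[OF integrable_diff[OF int1' int2']] integral_diff[OF int1' int2'] by simp
    also have "integral {0..t} yd1 = integral {0..t} yd2"
      using yd1 yd2 t unfolding weak_deriv_on_def by (metis add_left_cancel)
    finally show ?thesis by simp
  qed
  then have "AE t in lebesgue. t \<in> {0..T} \<longrightarrow> (yd1 t - yd2 t) \<bullet> b = 0" for b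
    using integrable_component[OF integrable_diff[OF int1 int2]] by (intro AE_zero_if_indefinite_integral_zero) auto
  then have "AE t in lebesgue. \<forall>b\<in>Basis. t \<in> {0..T} \<longrightarrow> (yd1 t - yd2 t) \<bullet> b = 0"
    by (intro eventually_ball_finite) auto
  then show ?thesis
    by eventually_elim (metis euclidean_eqI inner_diff_left eq_iff_diff_eq_0)
qed

lemma mesh_interval_cover:
  assumes mesh: "is_mesh T tm N" and t: "0 \<le> t" "t < T"
  obtains i where "i \<in> {1..N}" "tm i \<le> t" "t < tm (Suc i)"
proof -
  have "\<exists>i\<in>{1..n}. tm i \<le> t \<and> t < tm (Suc i)" if "t < tm (Suc n)" for n
    using that
  proof (induction n)
    case 0
    then show ?case using mesh t by (simp add: is_mesh_def)
  next
    case (Suc n)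
    show ?case
    proof (cases "t < tm (Suc n)")
      case True
      then obtain i where "i \<in> {1..n}" "tm i \<le> t \<and> t < tm (Suc i)"
        using Suc.IH by blast
      then show ?thesis
        by (intro bexI[of _ i]) auto
    next
      case False
      then show ?thesis
        using Suc.prems by (intro bexI[of _ "Suc n"]) auto
    qed
  qed
  moreover have "t < tm (Suc N)"
    using mesh t by (simp add: is_mesh_def)
  ultimately show ?thesis
    using that by blast
qed

(* u is constrained only on the half-open mesh intervals, so nothing is known about u T. *)
lemma in_Xhp_control_bounded:
  assumes mesh: "is_mesh T tm N" and X: "in_Xhp T tm N p y u"
  shows "bounded (u ` {0..<T})"
proof -
  have piece: "bounded (u ` {tm i..<tm (Suc i)})" if i: "i \<in> {1..N}" for i
  proof -
    obtain q where q: "\<And>k t. t \<in> {tm i..<tm (Suc i)} \<Longrightarrow> u t $ k = poly (q k) t"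
      using X i unfolding in_Xhp_def by metis
    have "u t = (\<chi> k. poly (q k) t)" if "t \<in> {tm i..<tm (Suc i)}" for t
      using q[OF that] by (simp add: vec_eq_iff)
    then have "u ` {tm i..<tm (Suc i)} \<subseteq> (\<lambda>t. \<chi> k. poly (q k) t) ` {tm i..tm (Suc i)}"
      by (auto intro: image_eqI)
    moreover have "compact ((\<lambda>t. \<chi> k. poly (q k) t) ` {tm i..tm (Suc i)})"
      by (intro compact_continuous_image continuous_on_vec_lambda continuous_intros) auto
    ultimately show ?thesis
      using bounded_subset compact_imp_bounded by blast
  qed
  have "u ` {0..<T} \<subseteq> (\<Union>i\<in>{1..N}. u ` {tm i..<tm (Suc i)})"
  proof safe
    fix t assume "t \<in> {0..<T}"
    then obtain i where "i \<in> {1..N}" "tm i \<le> t" "t < tm (Suc i)"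
      using mesh_interval_cover[OF mesh] by auto
    then show "u t \<in> (\<Union>i\<in>{1..N}. u ` {tm i..<tm (Suc i)})"
      by (intro UN_I[of i]) auto
  qed
  moreover have "bounded (\<Union>i\<in>{1..N}. u ` {tm i..<tm (Suc i)})"
    using piece by (intro bounded_UN) auto
  ultimately show ?thesis
    by (rule bounded_subset[rotated])
qed

lemma in_Xhp_ess_bounded:
  assumes mesh: "is_mesh T tm N" and X: "in_Xhp T tm N p y u"
  shows "ess_bounded_on T (\<lambda>t. (y t, u t))"
proof -
  have "bounded (y ` {0..T})"
    using X unfolding in_Xhp_def by (intro compact_imp_bounded compact_continuous_image) auto
  then have "bounded (y ` {0..T} \<times> u ` {0..<T})"
    using in_Xhp_control_bounded[OF mesh X] by (rule bounded_Times)
  then obtain B where "\<forall>z \<in> y ` {0..T} \<times> u ` {0..<T}. norm z \<le> B"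
    unfolding bounded_iff by blast
  moreover have "(y t, u t) \<in> y ` {0..T} \<times> u ` {0..<T}" if "t \<in> {0..<T}" for t
    using that by simp
  ultimately have B: "norm (y t, u t) \<le> B" if "t \<in> {0..<T}" for t
    using that by blast
  have "AE t in lebesgue. t \<noteq> T"
    using AE_lborel_singleton by (rule AE_completion)
  then have "AE t in lebesgue. t \<in> {0..T} \<longrightarrow> norm (y t, u t) \<le> B"
    by eventually_elim (auto intro: B)
  then show ?thesis
    unfolding ess_bounded_on_def by blast
qed

lemma ess_bounded_on_Pair:
  assumes "ess_bounded_on T f" and "ess_bounded_on T g"
  shows "ess_bounded_on T (\<lambda>t. (f t, g t))"
proof -
  obtain A B where "AE t in lebesgue. t \<in> {0..T} \<longrightarrow> norm (f t) \<le> A"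
    and "AE t in lebesgue. t \<in> {0..T} \<longrightarrow> norm (g t) \<le> B"
    using assms unfolding ess_bounded_on_def by blast
  then have "AE t in lebesgue. t \<in> {0..T} \<longrightarrow> norm (f t, g t) \<le> A + B"
    by eventually_elim (use norm_Pair_le in \<open>fastforce intro: order_trans\<close>)
  then show ?thesis
    unfolding ess_bounded_on_def by blast
qed

lemma ess_bounded_on_diff:
  assumes "ess_bounded_on T f" and "ess_bounded_on T g"
  shows "ess_bounded_on T (\<lambda>t. f t - g t)"
proof -
  obtain A B where "AE t in lebesgue. t \<in> {0..T} \<longrightarrow> norm (f t) \<le> A"
    and "AE t in lebesgue. t \<in> {0..T} \<longrightarrow> norm (g t) \<le> B"
    using assms unfolding ess_bounded_on_def by blast
  then have "AE t in lebesgue. t \<in> {0..T} \<longrightarrow> norm (f t - g t) \<le> A + B"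
    by eventually_elim (use norm_triangle_ineq4 in \<open>fastforce intro: order_trans\<close>)
  then show ?thesis
    unfolding ess_bounded_on_def by blast
qed

(* ess_sup_on is the infimum of the essential upper bounds; it carries information only when
   such a bound exists, hence the boundedness hypotheses below. *)
lemma ess_sup_on_nonneg:
  assumes T: "T > 0" and nonneg: "\<And>t. 0 \<le> g t"
    and bdd: "\<exists>c. AE t in lebesgue. t \<in> {0..T} \<longrightarrow> g t \<le> c"
  shows "0 \<le> ess_sup_on T g"
  unfolding ess_sup_on_def
proof (rule cInf_greatest)
  fix c assume "c \<in> {c. AE t in lebesgue. t \<in> {0..T} \<longrightarrow> g t \<le> c}"
  show "0 \<le> c"
  proof (rule ccontr)
    assume "\<not> 0 \<le> c"
    then have "\<not> g t \<le> c" for t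
      using nonneg[of t] by linarith
    with \<open>c \<in> _\<close> have "AE t in lebesgue. t \<notin> {0..T}"
      by (auto elim: eventually_mono)
    then have "{0..T} \<in> null_sets lebesgue"
      by (subst AE_iff_null_sets) auto
    then show False
      using T negligible_interval(1)[of 0 T] by (simp add: negligible_iff_null_sets)
  qed
qed (use bdd in auto)

lemma AE_le_if_ess_sup_on_less:
  assumes bdd: "\<exists>c. AE t in lebesgue. t \<in> {0..T} \<longrightarrow> g t \<le> c" and less: "ess_sup_on T g < c"
  shows "AE t in lebesgue. t \<in> {0..T} \<longrightarrow> g t \<le> c"
proof -
  have "{c. AE t in lebesgue. t \<in> {0..T} \<longrightarrow> g t \<le> c} \<noteq> {}"
    using bdd by blast
  from cInf_lessD[OF this] less
  obtain c' where "AE t in lebesgue. t \<in> {0..T} \<longrightarrow> g t \<le> c'" "c' < c"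
    unfolding ess_sup_on_def by blast
  then show ?thesis
    by (auto elim: eventually_mono)
qed

lemma square_sum_le: "(a + b)\<^sup>2 \<le> 2 * a\<^sup>2 + 2 * (b::real)\<^sup>2"
  using sum_squares_bound[of a b] by (simp add: power2_sum)

lemma L2_on_diff:
  assumes a: "L2_on T a" and b: "L2_on T b"
  shows "L2_on T (\<lambda>t. a t - b t)"
proof -
  have meas: "(\<lambda>t. a t - b t) measurable_on {0..T}"
    using a b by (intro measurable_on_diff) (auto simp: L2_on_def)
  have "(\<lambda>t. (norm (a t - b t))\<^sup>2) integrable_on {0..T}"
  proof (rule measurable_bounded_by_integrable_imp_integrable)
    show "(\<lambda>t. (norm (a t - b t))\<^sup>2) \<in> borel_measurable (lebesgue_on {0..T})"
      using meas by (simp add: measurable_on_iff_borel_measurable)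
    show "(\<lambda>t. 2 * (norm (a t))\<^sup>2 + 2 * (norm (b t))\<^sup>2) integrable_on {0..T}"
      using a b by (intro integrable_add integrable_cmul) (auto simp: L2_on_def)
    fix t
    have "(norm (a t - b t))\<^sup>2 \<le> (norm (a t) + norm (b t))\<^sup>2"
      by (intro power_mono norm_triangle_ineq4) auto
    also have "\<dots> \<le> 2 * (norm (a t))\<^sup>2 + 2 * (norm (b t))\<^sup>2"
      by (rule square_sum_le)
    finally show "norm ((norm (a t - b t))\<^sup>2) \<le> 2 * (norm (a t))\<^sup>2 + 2 * (norm (b t))\<^sup>2"
      by simp
  qed simp
  with meas show ?thesis
    by (simp add: L2_on_def)
qed

(* The factor 2 is slack for the infimum in ess_sup_on; sqrt DIM turns infnorm into norm. *)
lemma X_close_imp_L2_and_sup_bounds: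
  fixes y y' :: "real \<Rightarrow> real^'ny" and u u' :: "real \<Rightarrow> real^'nu"
  assumes T: "T > 0" and close: "X_close T y u y' u' d" and d: "d > 0"
    and bdd: "ess_bounded_on T (\<lambda>t. (y t - y' t, u t - u' t))"
  obtains yd yd' where "weak_deriv_on T y yd" "weak_deriv_on T y' yd'"
    "L2_on T (\<lambda>t. yd t - yd' t)" "integral {0..T} (\<lambda>t. (norm (yd t - yd' t))\<^sup>2) \<le> d\<^sup>2"
    "AE t in lebesgue. t \<in> {0..T} \<longrightarrow>
       norm (y t - y' t, u t - u' t) \<le> 2 * sqrt DIM((real^'ny) \<times> (real^'nu)) * d"
proof -
  obtain yd yd' where yd: "weak_deriv_on T y yd" "weak_deriv_on T y' yd'"
    and L2: "L2_on T (\<lambda>t. yd t - yd' t)"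
    and norm_le: "X_norm T (\<lambda>t. yd t - yd' t) (\<lambda>t. y t - y' t) (\<lambda>t. u t - u' t) \<le> d"
    using close L2_on_diff unfolding X_close_def by blast
  define g where "g = (\<lambda>t. infnorm (y t - y' t, u t - u' t))"
  define I where "I = integral {0..T} (\<lambda>t. (norm (yd t - yd' t))\<^sup>2)"
  have g_bdd: "\<exists>c. AE t in lebesgue. t \<in> {0..T} \<longrightarrow> g t \<le> c"
    using bdd unfolding ess_bounded_on_def g_def by (auto elim!: eventually_mono intro: order_trans[OF infnorm_le_norm])
  have I_nonneg: "0 \<le> I"
    using L2 unfolding I_def L2_on_def by (intro integral_nonneg) auto
  have "sqrt I + ess_sup_on T g \<le> d"
    using norm_le by (simp add: X_norm_def L2_norm_on_def I_def g_def)
  moreover have "0 \<le> ess_sup_on T g"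
    using T g_bdd by (intro ess_sup_on_nonneg) (simp_all add: g_def infnorm_pos_le)
  ultimately have sqrt_le: "sqrt I \<le> d" and ess_sup_less: "ess_sup_on T g < 2 * d"
    using d real_sqrt_ge_zero[OF I_nonneg] by linarith+
  from sqrt_le have "I \<le> d\<^sup>2"
    by (rule sqrt_le_D)
  have "AE t in lebesgue. t \<in> {0..T} \<longrightarrow> g t \<le> 2 * d"
    using g_bdd ess_sup_less by (rule AE_le_if_ess_sup_on_less)
  then have "AE t in lebesgue. t \<in> {0..T} \<longrightarrow>
      norm (y t - y' t, u t - u' t) \<le> 2 * sqrt DIM((real^'ny) \<times> (real^'nu)) * d"
  proof eventually_elim
    case (elim t)
    show ?case
      using norm_le_infnorm[of "(y t - y' t, u t - u' t)"] elim
        mult_left_mono[of "g t" "2 * d" "sqrt DIM((real^'ny) \<times> (real^'nu))"]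
      by (auto simp: g_def)
  qed
  with that yd L2 \<open>I \<le> d\<^sup>2\<close> show ?thesis
    unfolding I_def by blast
qed

lemma set_nn_integral_le_integral:
  fixes g H :: "'a::euclidean_space \<Rightarrow> real"
  assumes H: "H integrable_on S" and H_nonneg: "\<And>x. x \<in> S \<Longrightarrow> 0 \<le> H x"
    and le: "AE x in lebesgue. x \<in> S \<longrightarrow> g x \<le> H x"
  shows "(\<integral>\<^sup>+ x\<in>S. ennreal (g x) \<partial>lebesgue) \<le> ennreal (integral S H)"
proof -
  have H_int: "set_integrable lebesgue S H"
    using nonnegative_absolutely_integrable_1[OF H H_nonneg] .
  have "(\<integral>\<^sup>+ x\<in>S. ennreal (g x) \<partial>lebesgue) \<le> (\<integral>\<^sup>+ x. ennreal (indicator S x *\<^sub>R H x) \<partial>lebesgue)"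
    using le by (intro nn_integral_mono_AE) (auto elim!: eventually_mono simp: indicator_def intro!: ennreal_leI)
  also have "\<dots> = ennreal (LINT x:S|lebesgue. H x)"
    using H_int H_nonneg unfolding set_integrable_def set_lebesgue_integral_def
    by (intro nn_integral_eq_integral) (auto simp: indicator_def)
  also have "\<dots> = ennreal (integral S H)"
    by (simp add: set_lebesgue_integral_eq_integral(2)[OF H_int])
  finally show ?thesis .
qed

lemma norm_residual_le:
  fixes x x' e :: "'a::real_normed_vector" and z z' :: "'b::real_normed_vector"
  assumes "z' = 0"
  shows "norm (x - e, z) \<le> norm (x' - e) + norm (x' - x, z' - z)"
proof -
  have "(x - e, z) = (x' - e, 0) - (x' - x, z' - z)"
    using assms by simp
  then show ?thesis
    using norm_triangle_ineq4[of "(x' - e, 0)" "(x' - x, z' - z)"] by (simp add: norm_Pair)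
qed

lemma residual_nn_integral_le:
  fixes ys y yds yd' yd :: "real \<Rightarrow> real^'ny" and us u :: "real \<Rightarrow> real^'nu"
    and f1 :: "real^'ny \<Rightarrow> real^'nu \<Rightarrow> real \<Rightarrow> real^'ny"
    and f2 :: "real^'ny \<Rightarrow> real^'nu \<Rightarrow> real \<Rightarrow> real^'nc"
  assumes T: "0 \<le> T" and feasible: "feasible T b f1 f2 yL yR uL uR ys us"
    and holder: "\<forall>t\<in>{0..T}. \<forall>v w. norm (ys t - v, us t - w) \<le> eps \<longrightarrow>
        norm (f1 (ys t) (us t) t - f1 v w t, f2 (ys t) (us t) t - f2 v w t)
          \<le> Clam * norm (ys t - v, us t - w) powr lam"
    and lam: "0 \<le> lam" and Clam: "0 \<le> Clam"
    and yds: "weak_deriv_on T ys yds" and yd': "weak_deriv_on T y yd'" and yd: "weak_deriv_on T y yd"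
    and L2: "L2_on T (\<lambda>t. yds t - yd' t)"
    and I: "integral {0..T} (\<lambda>t. (norm (yds t - yd' t))\<^sup>2) \<le> d\<^sup>2"
    and near: "AE t in lebesgue. t \<in> {0..T} \<longrightarrow> norm (ys t - y t, us t - u t) \<le> r"
    and r: "r \<le> eps"
  shows "(\<integral>\<^sup>+ t\<in>{0..T}. ennreal ((norm (f1 (y t) (u t) t - yd t, f2 (y t) (u t) t))\<^sup>2) \<partial>lebesgue)
    \<le> ennreal (2 * T * (Clam * r powr lam)\<^sup>2 + 2 * d\<^sup>2)"
proof -
  define E where "E = Clam * r powr lam"
  obtain yd0 where yd0: "weak_deriv_on T ys yd0"
    and dyn: "AE t in lebesgue. t \<in> {0..T} \<longrightarrow> yd0 t = f1 (ys t) (us t) t"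
    and alg: "AE t in lebesgue. t \<in> {0..T} \<longrightarrow> f2 (ys t) (us t) t = 0"
    using feasible unfolding feasible_def by blast
  have "AE t in lebesgue. t \<in> {0..T} \<longrightarrow>
      (norm (f1 (y t) (u t) t - yd t, f2 (y t) (u t) t))\<^sup>2 \<le> 2 * E\<^sup>2 + 2 * (norm (yds t - yd' t))\<^sup>2"
    using weak_deriv_on_AE_unique[OF yd0 yds] weak_deriv_on_AE_unique[OF yd yd'] dyn alg near
  proof eventually_elim
    case (elim t)
    show ?case
    proof
      assume t: "t \<in> {0..T}"
      then have "norm (ys t - y t, us t - u t) \<le> eps"
        using elim r by auto
      then have "norm (f1 (ys t) (us t) t - f1 (y t) (u t) t, f2 (ys t) (us t) t - f2 (y t) (u t) t)
          \<le> Clam * norm (ys t - y t, us t - u t) powr lam"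
        using holder t by blast
      also have "\<dots> \<le> E"
        unfolding E_def using elim t lam Clam by (intro mult_left_mono powr_mono2) auto
      finally have "norm (f1 (y t) (u t) t - yd t, f2 (y t) (u t) t) \<le> norm (yds t - yd' t) + E"
        using norm_residual_le[of "f2 (ys t) (us t) t" "f1 (y t) (u t) t" "yd t" "f2 (y t) (u t) t"
            "f1 (ys t) (us t) t"] elim t by simp
      then have "(norm (f1 (y t) (u t) t - yd t, f2 (y t) (u t) t))\<^sup>2 \<le> (norm (yds t - yd' t) + E)\<^sup>2"
        by (intro power_mono) auto
      then show "(norm (f1 (y t) (u t) t - yd t, f2 (y t) (u t) t))\<^sup>2 \<le> 2 * E\<^sup>2 + 2 * (norm (yds t - yd' t))\<^sup>2"
        using square_sum_le[of "norm (yds t - yd' t)" E] by linarith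
    qed
  qed
  then have "(\<integral>\<^sup>+ t\<in>{0..T}. ennreal ((norm (f1 (y t) (u t) t - yd t, f2 (y t) (u t) t))\<^sup>2) \<partial>lebesgue)
      \<le> ennreal (integral {0..T} (\<lambda>t. 2 * E\<^sup>2 + 2 * (norm (yds t - yd' t))\<^sup>2))"
    using L2 by (intro set_nn_integral_le_integral integrable_add integrable_cmul) (auto simp: L2_on_def)
  also have "integral {0..T} (\<lambda>t. 2 * E\<^sup>2 + 2 * (norm (yds t - yd' t))\<^sup>2)
      = 2 * T * E\<^sup>2 + 2 * integral {0..T} (\<lambda>t. (norm (yds t - yd' t))\<^sup>2)"
  proof -
    have "(\<lambda>t. (norm (yds t - yd' t))\<^sup>2) integrable_on {0..T}"
      using L2 by (simp add: L2_on_def)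
    then show ?thesis
      using T by (subst integral_add) (auto intro: integrable_on_cmult_left)
  qed
  also have "\<dots> \<le> 2 * T * E\<^sup>2 + 2 * d\<^sup>2"
    using I by simp
  finally show ?thesis
    by (simp add: E_def ennreal_leI)
qed

lemma rate_bound:
  fixes h k T Clam Ceta eta lam :: real
  assumes h: "0 < h" "h \<le> 1" and lam: "0 < lam" "lam \<le> 1" and eta: "0 < eta"
    and k: "0 \<le> k" and T: "0 \<le> T"
  shows "2 * T * (Clam * (k * h powr eta) powr lam)\<^sup>2 + 2 * (Ceta * h powr eta)\<^sup>2
    \<le> (2 * T * (Clam * k powr lam)\<^sup>2 + 2 * Ceta\<^sup>2) * h powr (2 * lam * eta)"
proof -
  have square: "(h powr a)\<^sup>2 = h powr (2 * a)" for a
    by (simp add: power2_eq_square powr_add[symmetric])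
  have "(Clam * (k * h powr eta) powr lam)\<^sup>2 = (Clam * k powr lam)\<^sup>2 * h powr (2 * lam * eta)"
    using k h square[of "eta * lam"] by (simp add: powr_mult powr_powr power_mult_distrib mult_ac)
  then have "2 * T * (Clam * (k * h powr eta) powr lam)\<^sup>2 + 2 * (Ceta * h powr eta)\<^sup>2
      = 2 * T * (Clam * k powr lam)\<^sup>2 * h powr (2 * lam * eta) + 2 * (Ceta * h powr eta)\<^sup>2"
    by simp
  also have "\<dots> \<le> 2 * T * (Clam * k powr lam)\<^sup>2 * h powr (2 * lam * eta) + 2 * (Ceta\<^sup>2 * h powr (2 * lam * eta))"
    using h lam eta square[of eta] by (simp add: power_mult_distrib mult_left_mono powr_mono')
  also have "\<dots> = (2 * T * (Clam * k powr lam)\<^sup>2 + 2 * Ceta\<^sup>2) * h powr (2 * lam * eta)"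
    by (simp add: algebra_simps)
  finally show ?thesis .
qed

lemma approximant_residual_le:
  fixes ys y yd :: "real \<Rightarrow> real^'ny" and us u :: "real \<Rightarrow> real^'nu"
    and f1 :: "real^'ny \<Rightarrow> real^'nu \<Rightarrow> real \<Rightarrow> real^'ny"
    and f2 :: "real^'ny \<Rightarrow> real^'nu \<Rightarrow> real \<Rightarrow> real^'nc"
  assumes T: "T > 0" and feasible: "feasible T b f1 f2 yL yR uL uR ys us"
    and holder: "\<forall>t\<in>{0..T}. \<forall>v w. norm (ys t - v, us t - w) \<le> eps \<longrightarrow>
        norm (f1 (ys t) (us t) t - f1 v w t, f2 (ys t) (us t) t - f2 v w t)
          \<le> Clam * norm (ys t - v, us t - w) powr lam"
    and lam: "0 \<le> lam" and Clam: "0 \<le> Clam"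
    and mesh: "is_mesh T tm N" and discrete: "in_Xhp T tm N p y u"
    and close: "X_close T ys us y u d" and d: "d > 0"
    and small: "2 * sqrt DIM((real^'ny) \<times> (real^'nu)) * d \<le> eps"
    and yd: "weak_deriv_on T y yd"
  shows "(\<integral>\<^sup>+ t\<in>{0..T}. ennreal ((norm (f1 (y t) (u t) t - yd t, f2 (y t) (u t) t))\<^sup>2) \<partial>lebesgue)
    \<le> ennreal (2 * T * (Clam * (2 * sqrt DIM((real^'ny) \<times> (real^'nu)) * d) powr lam)\<^sup>2 + 2 * d\<^sup>2)"
proof -
  have "ess_bounded_on T (\<lambda>t. (ys t, us t))"
    using feasible by (intro ess_bounded_on_Pair) (simp_all add: feasible_def in_X_def)
  from ess_bounded_on_diff[OF this in_Xhp_ess_bounded[OF mesh discrete]]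
  have "ess_bounded_on T (\<lambda>t. (ys t - y t, us t - u t))"
    by simp
  with T close d obtain yds yd' where "weak_deriv_on T ys yds" "weak_deriv_on T y yd'"
    "L2_on T (\<lambda>t. yds t - yd' t)" "integral {0..T} (\<lambda>t. (norm (yds t - yd' t))\<^sup>2) \<le> d\<^sup>2"
    "AE t in lebesgue. t \<in> {0..T} \<longrightarrow>
       norm (ys t - y t, us t - u t) \<le> 2 * sqrt DIM((real^'ny) \<times> (real^'nu)) * d"
    by (rule X_close_imp_L2_and_sup_bounds)
  with T small show ?thesis
    by (intro residual_nn_integral_le[OF _ feasible holder lam Clam _ _ yd]) auto
qed

lemma powr_le_if_le_root:
  fixes h a eta :: real
  assumes "0 < h" "0 < eta" "0 < a" "h \<le> a powr (1 / eta)"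
  shows "h powr eta \<le> a"
proof -
  have "h powr eta \<le> (a powr (1 / eta)) powr eta"
    using assms by (intro powr_mono2) auto
  also have "\<dots> = a"
    using assms by (simp add: powr_powr)
  finally show ?thesis .
qed

theorem mainTheorem19:
  fixes T :: real and p :: nat
    and M :: "real^'ny \<Rightarrow> real^'ny \<Rightarrow> real"
    and b :: "real^'ny \<Rightarrow> real^'ny \<Rightarrow> real^'nb"
    and f1 :: "real^'ny \<Rightarrow> real^'nu \<Rightarrow> real \<Rightarrow> real^'ny"
    and f2 :: "real^'ny \<Rightarrow> real^'nu \<Rightarrow> real \<Rightarrow> real^'nc"
    and yL yR :: "real^'ny" and uL uR :: "real^'nu"
    and ys :: "real \<Rightarrow> real^'ny" and us :: "real \<Rightarrow> real^'nu"
    and samp :: "(nat \<Rightarrow> real) \<Rightarrow> nat \<Rightarrow> real set"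
    and mesh :: "real \<Rightarrow> nat \<Rightarrow> real" and Nm :: "real \<Rightarrow> nat"
    and yh :: "real \<Rightarrow> real \<Rightarrow> real^'ny" and uh :: "real \<Rightarrow> real \<Rightarrow> real^'nu"
    and h0 eta Ceta lam Clam eps :: real
  assumes T_pos: "T > 0" and p_pos: "p \<ge> 1"
    and yLR: "\<forall>i. yL $ i \<le> yR $ i" and uLR: "\<forall>j. uL $ j \<le> uR $ j"
    and minim: "local_minimizer T M b f1 f2 yL yR uL uR ys us"
    \<comment> \<open>Approximability, with (yh h, uh h) the fixed approximating pair for mesh width h\<close>
    and h0_pos: "h0 > 0" and eta_pos: "eta > 0" and Ceta_pos: "Ceta > 0"
    and mesh_ok: "\<forall>h. 0 < h \<and> h \<le> h0 \<longrightarrow> is_mesh T (mesh h) (Nm h) \<and> mesh_width (mesh h) (Nm h) = h"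
    and approx_B: "\<forall>h. 0 < h \<and> h \<le> h0 \<longrightarrow> in_Bhp T samp (mesh h) (Nm h) p yL yR uL uR (yh h) (uh h)"
    and approx_dist: "\<forall>h. 0 < h \<and> h \<le> h0 \<longrightarrow> X_close T ys us (yh h) (uh h) (Ceta * h powr eta)"
    \<comment> \<open>(A.3)\<close>
    and lam_range: "0 < lam \<and> lam \<le> 1" and Clam_pos: "Clam > 0" and eps_pos: "eps > 0"
    and M_holder: "\<forall>v0 vT. norm (ys 0 - v0, ys T - vT) \<le> eps \<longrightarrow>
        \<bar>M (ys 0) (ys T) - M v0 vT\<bar> \<le> Clam * norm (ys 0 - v0, ys T - vT) powr lam"
    and b_holder: "\<forall>v0 vT. norm (ys 0 - v0, ys T - vT) \<le> eps \<longrightarrow>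
        norm (b (ys 0) (ys T) - b v0 vT) \<le> Clam * norm (ys 0 - v0, ys T - vT) powr lam"
    and f_holder: "\<forall>t\<in>{0..T}. \<forall>v w. norm (ys t - v, us t - w) \<le> eps \<longrightarrow>
        norm (f1 (ys t) (us t) t - f1 v w t, f2 (ys t) (us t) t - f2 v w t)
          \<le> Clam * norm (ys t - v, us t - w) powr lam"
  shows "\<exists>C>0. \<exists>h1>0. \<forall>h. 0 < h \<and> h \<le> h1 \<longrightarrow>
     (\<forall>yd. weak_deriv_on T (yh h) yd \<longrightarrow>
        (\<integral>\<^sup>+ t\<in>{0..T}. ennreal ((norm (f1 (yh h t) (uh h t) t - yd t, f2 (yh h t) (uh h t) t))\<^sup>2) \<partial>lebesgue)
          \<le> ennreal (C * h powr (2 * lam * eta)))"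
proof -
  define K where "K = sqrt DIM((real^'ny) \<times> (real^'nu))"
  define C where "C = 2 * T * (Clam * (2 * K * Ceta) powr lam)\<^sup>2 + 2 * Ceta\<^sup>2"
  define h1 where "h1 = min (min h0 1) ((eps / (2 * K * Ceta)) powr (1 / eta))"
  have K: "K > 0"
    by (simp add: K_def add_pos_nonneg)
  have feasible: "feasible T b f1 f2 yL yR uL uR ys us"
    using minim by (simp add: local_minimizer_def)
  show ?thesis
  proof (rule exI[of _ C], intro conjI exI[of _ h1] allI impI)
    show "C > 0" "h1 > 0"
      using T_pos Ceta_pos K eps_pos h0_pos by (simp_all add: C_def h1_def add_nonneg_pos)
    fix h yd assume h: "0 < h \<and> h \<le> h1" and yd: "weak_deriv_on T (yh h) yd"
    have h0: "h \<le> h0" "h \<le> 1" and "h powr eta \<le> eps / (2 * K * Ceta)"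
      using h eta_pos eps_pos K Ceta_pos by (auto simp: h1_def intro: powr_le_if_le_root)
    then have "2 * K * (Ceta * h powr eta) \<le> eps"
      using K Ceta_pos by (simp add: field_simps)
    then have "(\<integral>\<^sup>+ t\<in>{0..T}. ennreal ((norm (f1 (yh h t) (uh h t) t - yd t, f2 (yh h t) (uh h t) t))\<^sup>2) \<partial>lebesgue)
        \<le> ennreal (2 * T * (Clam * (2 * K * (Ceta * h powr eta)) powr lam)\<^sup>2 + 2 * (Ceta * h powr eta)\<^sup>2)"
      using mesh_ok approx_B approx_dist h h0 T_pos lam_range Clam_pos Ceta_pos unfolding K_def
      by (intro approximant_residual_le[OF T_pos feasible f_holder _ _ _ _ _ _ _ yd])
        (auto simp: in_Bhp_def)
    also have "\<dots> \<le> ennreal (C * h powr (2 * lam * eta))"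
      using rate_bound[of h lam eta "2 * K * Ceta" T Clam Ceta] h h0 lam_range eta_pos K Ceta_pos T_pos
      by (intro ennreal_leI) (simp add: C_def mult.assoc)
    finally show "(\<integral>\<^sup>+ t\<in>{0..T}. ennreal ((norm (f1 (yh h t) (uh h t) t - yd t, f2 (yh h t) (uh h t) t))\<^sup>2) \<partial>lebesgue)
        \<le> ennreal (C * h powr (2 * lam * eta))" .
  qed
qed

end
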